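(* Let $n,x$ be integers with $1<x<n$, so that $G=C_{2n}(x,1,n)$ is a $5$-regular circulant graph. If $\tfrac{n}{2}<x\leq \tfrac{2n}{3}$, then $G$ is word-representable and $R(G)\leq 5$.
   Context: Two distinct letters $x,y$ alternate in a word $w$ if, after deleting all other letters from $w$, the resulting word is of the form $xyxy\cdots$ or $yxyx\cdots$ (of even or odd length). A graph $G=(V,E)$ is word-representable if there is a word $w$ over the alphabet $V$, containing every letter of $V$ at least once, such that for all distinct $x,y\in V$, $xy\in E$ if and only if $x$ and $y$ alternate in $w$. A word is $k$-uniform if every letter occurs in it exactly $k$ times; $G$ is $k$-representable if some $k$-uniform word represents it, and the representation number $R(G)$ of a word-representable graph $G$ is the least such $k$. For an integer $m$ and a set $R$ of positive integers each at most $m/2$, the circulant graph $C_m(R)$ has vertex set $\{0,1,\dots,m-1\}$, with $i$ and $j$ adjacent iff $\min(|i-j|,\,m-|i-j|)\in R$. $C_{2n}(x,1,n)$ denotes the circulant graph on $2n$ vertices with jump set $\{1,x,n\}$; it is $5$-regular exactly when $1<x<n$. *)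

theory Defs
  imports Complex_Main
begin

definition alternate :: "'a list \<Rightarrow> 'a \<Rightarrow> 'a \<Rightarrow> bool" where
  "alternate w x y \<longleftrightarrow>
     (let u = filter (\<lambda>z. z = x \<or> z = y) w in
        u = map (\<lambda>i. if even i then x else y) [0..<length u] \<or>
        u = map (\<lambda>i. if even i then y else x) [0..<length u])"

definition represents :: "'a set \<Rightarrow> ('a \<Rightarrow> 'a \<Rightarrow> bool) \<Rightarrow> 'a list \<Rightarrow> bool" where
  "represents V E w \<longleftrightarrow> set w = V \<and>
     (\<forall>x\<in>V. \<forall>y\<in>V. x \<noteq> y \<longrightarrow> (E x y \<longleftrightarrow> alternate w x y))"

definition word_representable :: "'a set \<Rightarrow> ('a \<Rightarrow> 'a \<Rightarrow> bool) \<Rightarrow> bool" where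
  "word_representable V E \<longleftrightarrow> (\<exists>w. represents V E w)"

definition uniform :: "nat \<Rightarrow> 'a list \<Rightarrow> bool" where
  "uniform k w \<longleftrightarrow> (\<forall>a\<in>set w. count_list w a = k)"

definition k_representable :: "nat \<Rightarrow> 'a set \<Rightarrow> ('a \<Rightarrow> 'a \<Rightarrow> bool) \<Rightarrow> bool" where
  "k_representable k V E \<longleftrightarrow> (\<exists>w. uniform k w \<and> represents V E w)"

definition rep_number :: "'a set \<Rightarrow> ('a \<Rightarrow> 'a \<Rightarrow> bool) \<Rightarrow> nat" where
  "rep_number V E = (LEAST k. k_representable k V E)"

definition circ_vertices :: "nat \<Rightarrow> nat set" where
  "circ_vertices m = {0..<m}"

definition circ_adj :: "nat \<Rightarrow> nat set \<Rightarrow> nat \<Rightarrow> nat \<Rightarrow> bool" where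
  "circ_adj m R i j \<longleftrightarrow>
     (let d = (if i \<le> j then j - i else i - j) in min d (m - d) \<in> R)"

end

theory Submission
  imports Defs
begin

(* The representing word is the concatenation, over t = 0, ..., 2n-1, of the blocks
   t, t-1, t-x, t+n, t+x (mod 2n); every vertex occurs in it exactly five times.
   Shifting every letter by 1 turns the word into a rotation of itself, and rotations
   preserve the alternation of two letters that occur equally often; hence whether a and b
   alternate depends only on b - a mod 2n, and by the symmetry d <-> 2n - d it suffices
   to consider the pairs 0, d with d in {1, x, n} and the non-neighbours d of 0.
   A non-neighbour d does not occur between the first two occurrences of 0, since the word
   begins 0, -1, -x, n, x, 1, 0. For d = 1, x, n the ten occurrences of 0 and d are listed
   explicitly and seen to interleave; for d = x and d = n this needs n/2 < x <= 2n/3. *)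

definition alternating :: "'a \<Rightarrow> 'a \<Rightarrow> nat \<Rightarrow> 'a list" where
  "alternating a b k = map (\<lambda>i. if even i then a else b) [0..<k]"

lemma length_alternating [simp]: "length (alternating a b k) = k"
  by (simp add: alternating_def)

lemma nth_alternating [simp]: "i < k \<Longrightarrow> alternating a b k ! i = (if even i then a else b)"
  by (simp add: alternating_def)

lemma alternate_iff_alternating:
  "alternate w a b \<longleftrightarrow>
     (let u = filter (\<lambda>z. z = a \<or> z = b) w
      in u = alternating a b (length u) \<or> u = alternating b a (length u))"
  by (simp add: alternate_def alternating_def)

lemma alternate_commute: "alternate w a b \<longleftrightarrow> alternate w b a"
  unfolding alternate_iff_alternating Let_def by (metis (no_types, lifting) filter_cong)

lemma rotate_alternating:
  assumes "even k"
  shows "rotate i (alternating a b k) = (if even i then alternating a b k else alternating b a k)"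
proof (rule nth_equalityI)
  fix j assume "j < length (rotate i (alternating a b k))"
  then have j: "j < k" by simp
  have "even ((i + j) mod k) \<longleftrightarrow> even (i + j)"
    using assms by (simp add: dvd_mod_iff)
  then show "rotate i (alternating a b k) ! j =
      (if even i then alternating a b k else alternating b a k) ! j"
    using j by (auto simp: nth_rotate)
qed simp

lemma alternating_ne_append_square:
  assumes "a \<noteq> b"
  shows "alternating a b k \<noteq> p @ c # c # q"
proof
  assume eq: "alternating a b k = p @ c # c # q"
  then have "length (alternating a b k) = length (p @ c # c # q)" by (simp only:)
  then have k: "Suc (length p) < k" by simp
  have "alternating a b k ! length p = c" "alternating a b k ! Suc (length p) = c"
    by (simp_all add: eq nth_append)
  with k assms show False by (simp split: if_splits)
qed

lemma filter_rotate_eq_rotate_filter: "\<exists>i. filter P (rotate k xs) = rotate i (filter P xs)"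
proof -
  let ?j = "k mod length xs"
  have "filter P (rotate k xs) = filter P (drop ?j xs) @ filter P (take ?j xs)"
    by (simp add: rotate_drop_take)
  also have "\<dots> = rotate (length (filter P (take ?j xs))) (filter P xs)"
    by (metis append_take_drop_id filter_append rotate_append)
  finally show ?thesis by blast
qed

lemma count_list_rotate [simp]: "count_list (rotate k xs) x = count_list xs x"
  by (metis rotate_drop_take append_take_drop_id count_list_append add.commute)

lemma length_filter_two_letters:
  "a \<noteq> b \<Longrightarrow> length (filter (\<lambda>z. z = a \<or> z = b) w) = count_list w a + count_list w b"
  by (induction w) auto

lemma alternate_rotate:
  assumes ab: "a \<noteq> b" and counts: "count_list w a = count_list w b"
    and alt: "alternate w a b"
  shows "alternate (rotate k w) a b"
proof -
  define u where "u = filter (\<lambda>z. z = a \<or> z = b) w"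
  define L where "L = length u"
  obtain i where rot: "filter (\<lambda>z. z = a \<or> z = b) (rotate k w) = rotate i u"
    using filter_rotate_eq_rotate_filter unfolding u_def by blast
  have "even L"
    using length_filter_two_letters[OF ab] counts by (simp add: u_def L_def)
  moreover have "u = alternating a b L \<or> u = alternating b a L"
    using alt unfolding alternate_iff_alternating Let_def u_def L_def by simp
  ultimately have "rotate i u = alternating a b L \<or> rotate i u = alternating b a L"
    by (auto simp: rotate_alternating)
  then show ?thesis
    unfolding alternate_iff_alternating Let_def rot length_rotate L_def by simp
qed

lemma alternate_rotate_iff:
  assumes "a \<noteq> b" and "count_list w a = count_list w b"
  shows "alternate (rotate k w) a b \<longleftrightarrow> alternate w a b"
proof
  have undo: "rotate (length w * k - k) (rotate k w) = w"
  proof (cases "w = []")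
    case False
    then have "k \<le> length w * k" by (cases w) auto
    then have "length w * k - k + k = length w * k" by simp
    then show ?thesis by (simp add: rotate_rotate)
  qed simp
  assume "alternate (rotate k w) a b"
  then show "alternate w a b"
    using alternate_rotate[of a b "rotate k w" "length w * k - k"] assms by (simp add: undo)
next
  assume "alternate w a b"
  then show "alternate (rotate k w) a b"
    by (rule alternate_rotate[OF assms])
qed

lemma alternate_map_iff:
  assumes inj: "inj_on g (set w)" and "a \<in> set w" and "b \<in> set w"
  shows "alternate (map g w) (g a) (g b) \<longleftrightarrow> alternate w a b"
proof -
  define u where "u = filter (\<lambda>z. z = a \<or> z = b) w"
  have "\<And>z. z \<in> set w \<Longrightarrow> (g z = g a \<or> g z = g b) = (z = a \<or> z = b)"
    using inj assms by (auto dest: inj_onD)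
  then have filter_map_g: "filter (\<lambda>z. z = g a \<or> z = g b) (map g w) = map g u"
    unfolding u_def filter_map by (intro arg_cong[where f="map g"] filter_cong) auto
  have map_g_iff: "map g u = alternating (g s) (g t) k \<longleftrightarrow> u = alternating s t k"
    if "s \<in> set w" "t \<in> set w" for s t k
  proof -
    have "set u \<union> set (alternating s t k) \<subseteq> set w"
      using that by (auto simp: u_def alternating_def)
    then have "inj_on g (set u \<union> set (alternating s t k))"
      using inj inj_on_subset by blast
    moreover have "alternating (g s) (g t) k = map g (alternating s t k)"
      by (simp add: alternating_def)
    ultimately show ?thesis
      by (simp add: inj_on_map_eq_map)
  qed
  show ?thesis
    unfolding alternate_iff_alternating Let_def filter_map_g u_def[symmetric] length_map
    using map_g_iff assms by simp
qed

lemma filter_conv_map_nth: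
  "filter P xs = map ((!) xs) (filter (\<lambda>i. P (xs ! i)) [0..<length xs])"
  by (metis (no_types, lifting) comp_apply filter_cong filter_map map_nth)

lemma alternate_if_interleaved:
  assumes ab: "a \<noteq> b" and sorted: "sorted_wrt (<) ps"
    and bound: "\<forall>p\<in>set ps. p < length w"
    and letters: "map ((!) w) ps = alternating a b (length ps)"
    and counts: "count_list w a + count_list w b \<le> length ps"
  shows "alternate w a b"
proof -
  define P where "P = (\<lambda>z. z = a \<or> z = b)"
  define idx where "idx = filter (\<lambda>i. P (w ! i)) [0..<length w]"
  have idx_sorted: "sorted_wrt (<) idx"
    by (simp add: idx_def sorted_wrt_filter)
  have "set ps \<subseteq> set idx"
  proof
    fix p assume "p \<in> set ps"
    then obtain i where "i < length ps" "p = ps ! i" by (metis in_set_conv_nth)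
    then have "w ! p = alternating a b (length ps) ! i" by (metis letters nth_map)
    with \<open>i < length ps\<close> \<open>p \<in> set ps\<close> bound show "p \<in> set idx"
      by (auto simp: idx_def P_def)
  qed
  moreover have "card (set idx) \<le> card (set ps)"
  proof -
    have "card (set idx) = length idx"
      using idx_sorted by (metis distinct_card strict_sorted_iff)
    also have "\<dots> = length (filter P w)"
      by (simp add: filter_conv_map_nth[of P w] idx_def)
    also have "\<dots> \<le> length ps"
      using counts length_filter_two_letters[OF ab] by (simp add: P_def)
    finally show ?thesis
      using sorted by (simp add: strict_sorted_iff distinct_card)
  qed
  ultimately have "set ps = set idx" by (simp add: card_seteq)
  then have "ps = idx" using strict_sorted_equal sorted idx_sorted by blast
  then have "filter P w = alternating a b (length ps)"
    using letters by (simp add: filter_conv_map_nth[of P w] idx_def)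
  then show ?thesis
    unfolding alternate_iff_alternating Let_def P_def[symmetric] by simp
qed

lemma not_alternate_if_unseparated:
  assumes ab: "a \<noteq> b" and "b \<notin> set ys"
  shows "\<not> alternate (xs @ a # ys @ a # zs) a b"
proof -
  define P where "P = (\<lambda>z. z = a \<or> z = b)"
  have "\<forall>y\<in>set (filter P ys). y = a" using assms by (auto simp: P_def)
  then have "a # filter P ys = filter P ys @ [a]"
    by (metis replicate_length_same replicate_append_same)
  then have "filter P (xs @ a # ys @ a # zs) = (filter P xs @ filter P ys) @ a # a # filter P zs"
    by (simp add: P_def)
  then show ?thesis
    using alternating_ne_append_square ab
    unfolding alternate_iff_alternating Let_def P_def[symmetric] by metis
qed

definition circulant_word :: "nat \<Rightarrow> nat list \<Rightarrow> nat list" where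
  "circulant_word m B = concat (map (\<lambda>t. map (\<lambda>b. (t + b) mod m) B) [0..<m])"

lemma length_circulant_word [simp]: "length (circulant_word m B) = m * length B"
  by (simp add: circulant_word_def length_concat comp_def sum_list_triv)

lemma nth_circulant_word:
  assumes "t < m" and "j < length B"
  shows "circulant_word m B ! (t * length B + j) = (t + B ! j) mod m"
proof -
  define blk where "blk = (\<lambda>t. map (\<lambda>b. (t + b) mod m) B)"
  have "[0..<m] = [0..<t] @ t # [Suc t..<m]"
    using assms(1) upt_add_eq_append[of 0 t "m - t"] upt_conv_Cons[of t m] by simp
  then have "circulant_word m B =
      concat (map blk [0..<t]) @ blk t @ concat (map blk [Suc t..<m])"
    by (simp add: circulant_word_def blk_def)
  moreover have "length (concat (map blk [0..<t])) = t * length B"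
    by (simp add: blk_def length_concat comp_def sum_list_triv)
  ultimately show ?thesis
    using assms(2) by (simp add: nth_append blk_def)
qed

lemma set_circulant_word_subset: "0 < m \<Longrightarrow> set (circulant_word m B) \<subseteq> {0..<m}"
  by (auto simp: circulant_word_def)

lemma count_list_concat_map_Cons:
  "count_list (concat (map (\<lambda>t. f t # g t) ts)) v =
    count_list (map f ts) v + count_list (concat (map g ts)) v"
  by (induction ts) auto

lemma count_list_upt: "count_list [0..<m] v = (if v < m then 1 else 0)"
  by (induction m) auto

lemma count_list_circulant_word:
  assumes "v < m"
  shows "count_list (circulant_word m B) v = length B"
proof (induction B)
  case (Cons b B)
  have "map (\<lambda>t. (t + b) mod m) [0..<m] = rotate b [0..<m]"
    by (rule nth_equalityI) (simp_all add: nth_rotate add.commute)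
  then have "count_list (map (\<lambda>t. (t + b) mod m) [0..<m]) v = 1"
    using assms by (simp add: count_list_upt)
  with Cons.IH show ?case
    by (simp add: circulant_word_def count_list_concat_map_Cons)
qed (simp add: circulant_word_def)

lemma set_circulant_word:
  assumes "0 < m" and "B \<noteq> []"
  shows "set (circulant_word m B) = {0..<m}"
proof -
  have "v \<in> set (circulant_word m B)" if "v < m" for v
    using count_list_circulant_word[OF that, of B] assms(2) by (metis count_notin length_0_conv)
  then show ?thesis using set_circulant_word_subset[OF assms(1)] by auto
qed

lemma rotate_circulant_word_Suc:
  assumes "0 < m"
  shows "rotate (length B) (circulant_word m B) =
    map (\<lambda>z. Suc z mod m) (circulant_word m B)"
proof -
  define blk where "blk = (\<lambda>t. map (\<lambda>b. (t + b) mod m) B)"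
  have w: "circulant_word m B = concat (map blk [0..<m])"
    by (simp add: circulant_word_def blk_def)
  also have "\<dots> = blk 0 @ concat (map blk [1..<m])"
    using assms by (simp add: upt_conv_Cons)
  finally have "rotate (length B) (circulant_word m B) = concat (map blk [1..<m]) @ blk 0"
    using rotate_append[of "blk 0"] by (simp add: blk_def)
  also have "\<dots> = concat (map blk [1..<Suc m])"
    using assms by (simp add: blk_def)
  also have "\<dots> = concat (map (blk \<circ> Suc) [0..<m])"
    by (simp only: map_Suc_upt[symmetric] map_map One_nat_def)
  also have "\<dots> = concat (map (\<lambda>t. map (\<lambda>z. Suc z mod m) (blk t)) [0..<m])"
    by (simp add: blk_def comp_def mod_Suc_eq)
  also have "\<dots> = map (\<lambda>z. Suc z mod m) (circulant_word m B)"
    by (simp add: w map_concat comp_def)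
  finally show ?thesis .
qed

lemma rotate_circulant_word:
  assumes "0 < m"
  shows "rotate (c * length B) (circulant_word m B) =
    map (\<lambda>z. (z + c) mod m) (circulant_word m B)"
proof (induction c)
  case 0
  have "\<forall>z\<in>set (circulant_word m B). z mod m = z"
    using set_circulant_word_subset[OF assms, of B] by auto
  then show ?case by (simp add: map_idI)
next
  case (Suc c)
  have "rotate (Suc c * length B) (circulant_word m B)
      = rotate (length B) (rotate (c * length B) (circulant_word m B))"
    by (simp add: rotate_rotate)
  also have "\<dots> = map (\<lambda>z. (z + c) mod m) (rotate (length B) (circulant_word m B))"
    by (simp add: Suc.IH rotate_map)
  also have "\<dots> = map (\<lambda>z. (z + Suc c) mod m) (circulant_word m B)"
    by (simp add: rotate_circulant_word_Suc[OF assms] mod_add_left_eq)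
  finally show ?case .
qed

lemma inj_on_add_mod: "inj_on (\<lambda>z. (z + c) mod m) {0..<m::nat}"
proof -
  have "u = v" if "u < m" "v < m" "u \<le> v" "(u + c) mod m = (v + c) mod m" for u v
  proof -
    have "m dvd v - u"
      using that(3,4) mod_eq_dvd_iff_nat[of "u + c" "v + c" m] by simp
    then show ?thesis
      using that(1-3) nat_dvd_not_less[of "v - u" m] by (cases "v = u") auto
  qed
  then show ?thesis
    by (intro inj_onI) (metis atLeastLessThan_iff nat_le_linear)
qed

lemma alternate_circulant_word_shift:
  assumes "0 < m" and "B \<noteq> []" and "a < m" and "b < m" and "a \<noteq> b"
  shows "alternate (circulant_word m B) ((a + c) mod m) ((b + c) mod m) \<longleftrightarrow>
    alternate (circulant_word m B) a b"
proof -
  let ?w = "circulant_word m B"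
  let ?g = "\<lambda>z. (z + c) mod m"
  have "?g a \<noteq> ?g b" and "?g a < m" and "?g b < m"
    using assms inj_on_add_mod[of c m] by (auto dest: inj_onD)
  then have "alternate ?w (?g a) (?g b) \<longleftrightarrow>
      alternate (rotate (c * length B) ?w) (?g a) (?g b)"
    by (simp add: alternate_rotate_iff count_list_circulant_word)
  also have "\<dots> \<longleftrightarrow> alternate (map ?g ?w) (?g a) (?g b)"
    by (simp add: rotate_circulant_word assms(1))
  also have "\<dots> \<longleftrightarrow> alternate ?w a b"
    using assms inj_on_add_mod by (intro alternate_map_iff) (simp_all add: set_circulant_word)
  finally show ?thesis .
qed

lemma alternate_circulant_word_if_interleaved:
  assumes "a \<noteq> b" and "a < m" and "b < m"
    and sorted: "sorted_wrt (<) (map (\<lambda>(t, j). t * length B + j) tjs)"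
    and range: "\<forall>(t, j)\<in>set tjs. t < m \<and> j < length B"
    and letters: "map (\<lambda>(t, j). (t + B ! j) mod m) tjs = alternating a b (2 * length B)"
  shows "alternate (circulant_word m B) a b"
proof (rule alternate_if_interleaved)
  let ?ps = "map (\<lambda>(t, j). t * length B + j) tjs"
  have len: "length ?ps = 2 * length B"
    using letters by (metis length_alternating length_map)
  then show
    "count_list (circulant_word m B) a + count_list (circulant_word m B) b \<le> length ?ps"
    using assms(2,3) by (simp add: count_list_circulant_word)
  have "t * length B + j < m * length B" if "t < m" "j < length B" for t j
  proof -
    have "t * length B + j < Suc t * length B" using that(2) by simp
    also have "\<dots> \<le> m * length B" using that(1) by (intro mult_le_mono1) simp
    finally show ?thesis .
  qed
  then show "\<forall>p\<in>set ?ps. p < length (circulant_word m B)"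
    using range by auto
  have "map ((!) (circulant_word m B)) ?ps = map (\<lambda>(t, j). (t + B ! j) mod m) tjs"
    using range by (auto simp: nth_circulant_word)
  then show "map ((!) (circulant_word m B)) ?ps = alternating a b (length ?ps)"
    using letters len by simp
qed (use assms in simp_all)

lemma alternate_circulant_word_iff_0:
  assumes "B \<noteq> []" and "a < m" and "b < m" and "a \<noteq> b"
  shows "alternate (circulant_word m B) a b \<longleftrightarrow>
    alternate (circulant_word m B) 0 ((b + m - a) mod m)"
proof -
  define e where "e = (b + m - a) mod m"
  have "e < m" and "e \<noteq> 0" and "(e + a) mod m = b"
    using assms by (auto simp: e_def mod_add_left_eq mod_if)
  then show ?thesis
    using alternate_circulant_word_shift[of m B 0 e a] assms by (simp add: e_def)
qed

lemma alternate_circulant_word_0_reflect: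
  assumes "B \<noteq> []" and "0 < d" and "d < m"
  shows "alternate (circulant_word m B) 0 (m - d) \<longleftrightarrow>
    alternate (circulant_word m B) 0 d"
  using alternate_circulant_word_iff_0[of B d m 0] assms by (simp add: alternate_commute)

lemma circ_adj_iff_0:
  assumes "a < m" and "b < m"
  shows "circ_adj m R a b \<longleftrightarrow> circ_adj m R 0 ((b + m - a) mod m)"
proof (cases "a \<le> b")
  case False
  then have "(b + m - a) mod m = m - (a - b)" and "m - (m - (a - b)) = a - b"
    using assms by auto
  then show ?thesis
    using False by (simp add: circ_adj_def Let_def min.commute)
next
  case True
  then have "(b + m - a) mod m = b - a"
    using assms by (simp add: mod_if)
  then show ?thesis
    using True by (simp add: circ_adj_def Let_def)
qed

lemma uniform_circulant_word: "0 < m \<Longrightarrow> uniform (length B) (circulant_word m B)"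
  using set_circulant_word_subset[of m B] by (auto simp: uniform_def count_list_circulant_word)

lemma alternating_10: "alternating a b 10 = [a, b, a, b, a, b, a, b, a, b]"
  by (simp add: alternating_def upt_rec)

definition representing_word :: "nat \<Rightarrow> nat \<Rightarrow> nat list" where
  "representing_word n x = circulant_word (2 * n) [0, 2 * n - 1, 2 * n - x, n, x]"

context
  fixes n x :: nat
  assumes x_gt_1: "1 < x" and x_lt_n: "x < n"
    and n_lt_2x: "n < 2 * x" and three_x_le: "3 * x \<le> 2 * n"
begin

lemma alternate_representing_word_0_1: "alternate (representing_word n x) 0 1"
  unfolding representing_word_def
  by (rule alternate_circulant_word_if_interleaved[where tjs =
        "[(0, 0), (1, 0), (1, 1), (2, 1), (x, 2), (x + 1, 2), (n, 3), (n + 1, 3),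
          (2 * n - x, 4), (2 * n - x + 1, 4)]"])
    (use x_gt_1 x_lt_n three_x_le n_lt_2x in
      \<open>auto simp: alternating_10 sorted_wrt2 mod_if\<close>)

lemma alternate_representing_word_0_x: "alternate (representing_word n x) 0 x"
  unfolding representing_word_def
  by (rule alternate_circulant_word_if_interleaved[where tjs =
        "[(0, 0), (0, 4), (1, 1), (x, 0), (x, 2), (x + 1, 1), (n, 3), (2 * x, 2),
          (2 * n - x, 4), (x + n, 3)]"])
    (use x_gt_1 x_lt_n three_x_le n_lt_2x in
      \<open>auto simp: alternating_10 sorted_wrt2 mod_if\<close>)

lemma alternate_representing_word_0_n: "alternate (representing_word n x) 0 n"
  unfolding representing_word_def
  by (rule alternate_circulant_word_if_interleaved[where tjs =
        "[(0, 0), (0, 3), (1, 1), (n - x, 4), (x, 2), (n, 0), (n, 3), (n + 1, 1),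
          (2 * n - x, 4), (n + x, 2)]"])
    (use x_gt_1 x_lt_n three_x_le n_lt_2x in
      \<open>auto simp: alternating_10 sorted_wrt2 mod_if\<close>)

lemma not_alternate_representing_word_0:
  assumes "0 < d" and "d < 2 * n" and "d \<notin> {1, x, n, 2 * n - x, 2 * n - 1}"
  shows "\<not> alternate (representing_word n x) 0 d"
proof -
  have "[0..<2 * n] = 0 # 1 # [2..<2 * n]"
    using x_lt_n upt_conv_Cons[of 0 "2 * n"] upt_conv_Cons[of 1 "2 * n"]
    by (simp add: numeral_2_eq_2)
  then obtain zs where
    "representing_word n x = [] @ 0 # [2 * n - 1, 2 * n - x, n, x, 1] @ 0 # zs"
    using x_lt_n x_gt_1 by (simp add: representing_word_def circulant_word_def)
  then show ?thesis
    using not_alternate_if_unseparated[of 0 d "[2 * n - 1, 2 * n - x, n, x, 1]" "[]" zs] assms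
    by simp
qed

lemma alternate_representing_word_0_iff:
  assumes "0 < d" and "d < 2 * n"
  shows "alternate (representing_word n x) 0 d \<longleftrightarrow> circ_adj (2 * n) {1, x, n} 0 d"
proof -
  have reflect: "alternate (representing_word n x) 0 (2 * n - e) \<longleftrightarrow>
      alternate (representing_word n x) 0 e"
    if "0 < e" and "e < 2 * n" for e
    unfolding representing_word_def using that
    by (intro alternate_circulant_word_0_reflect) simp_all
  have adj: "circ_adj (2 * n) {1, x, n} 0 d \<longleftrightarrow> d \<in> {1, x, n, 2 * n - x, 2 * n - 1}"
    using assms x_gt_1 x_lt_n by (auto simp: circ_adj_def min_def)
  show ?thesis
  proof (cases "d \<in> {1, x, n, 2 * n - x, 2 * n - 1}")
    case True
    then have "alternate (representing_word n x) 0 d"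
      using alternate_representing_word_0_1 alternate_representing_word_0_x
        alternate_representing_word_0_n reflect[of 1] reflect[of x] x_gt_1 x_lt_n
      by auto
    with True adj show ?thesis by simp
  next
    case False
    with adj not_alternate_representing_word_0 assms show ?thesis by simp
  qed
qed

lemma represents_representing_word:
  "represents (circ_vertices (2 * n)) (circ_adj (2 * n) {1, x, n}) (representing_word n x)"
  unfolding represents_def
proof (intro conjI ballI impI)
  show "set (representing_word n x) = circ_vertices (2 * n)"
    using x_lt_n by (simp add: representing_word_def set_circulant_word circ_vertices_def)
next
  fix a b assume "a \<in> circ_vertices (2 * n)" and "b \<in> circ_vertices (2 * n)" and "a \<noteq> b"
  then have a: "a < 2 * n" and b: "b < 2 * n" by (auto simp: circ_vertices_def)
  define e where "e = (b + 2 * n - a) mod (2 * n)"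
  have "0 < e" and "e < 2 * n"
    using a b \<open>a \<noteq> b\<close> by (auto simp: e_def mod_if)
  have "circ_adj (2 * n) {1, x, n} a b \<longleftrightarrow> circ_adj (2 * n) {1, x, n} 0 e"
    using circ_adj_iff_0[OF a b] by (simp add: e_def)
  also have "\<dots> \<longleftrightarrow> alternate (representing_word n x) 0 e"
    using alternate_representing_word_0_iff[OF \<open>0 < e\<close> \<open>e < 2 * n\<close>] by simp
  also have "\<dots> \<longleftrightarrow> alternate (representing_word n x) a b"
    unfolding representing_word_def e_def
    using alternate_circulant_word_iff_0 a b \<open>a \<noteq> b\<close> by simp
  finally show "circ_adj (2 * n) {1, x, n} a b \<longleftrightarrow> alternate (representing_word n x) a b" .
qed

end

theorem theorem27:
  fixes n x :: nat
  assumes "1 < x" and "x < n"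
    and "real n / 2 < real x" and "real x \<le> 2 * real n / 3"
  shows "word_representable (circ_vertices (2*n)) (circ_adj (2*n) {1, x, n})
       \<and> rep_number (circ_vertices (2*n)) (circ_adj (2*n) {1, x, n}) \<le> 5"
proof -
  have "n < 2 * x" and "3 * x \<le> 2 * n"
    using assms(3,4) by (simp_all flip: of_nat_less_iff of_nat_le_iff)
  then have rep:
    "represents (circ_vertices (2 * n)) (circ_adj (2 * n) {1, x, n}) (representing_word n x)"
    using represents_representing_word assms(1,2) by blast
  have "uniform 5 (representing_word n x)"
    using uniform_circulant_word[of "2 * n" "[0, 2 * n - 1, 2 * n - x, n, x]"] assms(2)
    by (simp add: representing_word_def eval_nat_numeral)
  with rep have "k_representable 5 (circ_vertices (2 * n)) (circ_adj (2 * n) {1, x, n})"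
    unfolding k_representable_def by blast
  with rep show ?thesis
    unfolding word_representable_def rep_number_def by (blast intro: Least_le)
qed

end
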